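(* Let $x_{\gamma,\alpha}$ ($0\le\gamma<N$, $0\le\alpha\le K_\gamma$) and $y_0,\dots,y_{N-1}$ be variables, and let $f_0,\dots,f_{N-1}$ with $f_\gamma:\mathbb{R}^{K_\gamma+1}\to\mathbb{R}$ be either all monotone (non-decreasing in the pointwise order) or all antitone (non-increasing). If a state $(\sigma,\mu)$ satisfies $\circledast_{\gamma=0}^{N}\big(\bigwedge_{\alpha=0}^{K_\gamma+1}[x_{\gamma,\alpha}]\big)$ and, for every $\gamma$, $(\sigma,\mu)\models y_\gamma\sim f_\gamma(x_{\gamma,0},\dots,x_{\gamma,K_\gamma})$, then $(\sigma,\mu)\models\circledast_{\gamma=0}^{N}[y_\gamma]$.
   Context: Variables are split into disjoint sets $\mathcal{DV}$ (deterministic) and $\mathcal{RV}$ (randomized); values are real numbers. For finite $S$, $\mathrm{Mem}[S]$ is the set of maps $S\to\mathbb{R}$ ordered pointwise; $p_A$ is restriction; $\mathcal{D}(\cdot)$ denotes countably supported probability distributions; $\mathrm{dom}(\mu)=S$ for $\mu\in\mathcal{D}(\mathrm{Mem}[S])$; $\pi_A\mu$ is the marginal on $A$; $\mu\sqsubseteq\mu'$ iff $\mathrm{dom}(\mu)\subseteq\mathrm{dom}(\mu')$ and $\pi_{\mathrm{dom}(\mu)}\mu'=\mu$. A partition is a set of pairwise disjoint nonempty sets; $\mathcal{T}$ coarsens $\mathcal{S}$ if $\bigcup\mathcal{T}=\bigcup\mathcal{S}$ and each element of $\mathcal{T}$ is a union of a subfamily of $\mathcal{S}$. $\mu$ is $\mathcal{S}$-PNA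 if for every $\mathcal{T}$ coarsening $\mathcal{S}$ and every family $(f_A:\mathrm{Mem}[A]\to[0,\infty))_{A\in\mathcal{T}}$ all non-decreasing or all non-increasing, $\mathbb{E}_{m\sim\mu}[\prod_Af_A(p_Am)]\le\prod_A\mathbb{E}_{m\sim\mu}[f_A(p_Am)]$. $\mu_1\oplus\mu_2$ (domains $S,T$) is empty if $S\cap T\ne\emptyset$, and otherwise the set of $\mu\in\mathcal{D}(\mathrm{Mem}[S\cup T])$ with $\pi_S\mu=\mu_1$, $\pi_T\mu=\mu_2$ that are $(\mathcal{S}\cup\mathcal{T})$-PNA whenever $\mathcal{S}$ partitions a subset of $S$, $\mathcal{T}$ partitions a subset of $T$, $\mu_1$ is $\mathcal{S}$-PNA and $\mu_2$ is $\mathcal{T}$-PNA. States are pairs $(\sigma,\mu)$ of a deterministic memory and a distribution. Satisfaction: $(\sigma,\mu)\models[y]$ iff $y\in\mathrm{dom}(\sigma)\cup\mathrm{dom}(\mu)$; $(\sigma,\mu)\models e\sim e'$ iff all free variables of $e,e'$ lie in $\mathrm{dom}(\sigma)\cup\mathrm{dom}(\mu)$ and $e,e'$ evaluate to the same value on $(\sigma,m)$ for every $m$ in the support of $\mu$; conjunction is pointwise; $(\sigma,\mu)\models P\circledast Q$ iff there exist $\mu',\mu_1,\mu_2$ with $\mu'\sqsubseteq\mu$, $\mu'\in\mu_1\oplus\mu_2$, $(\sigma,\mu_1)\models P$, $(\sigma,\mu_2)\models Q$. Iterated: $\circledast_{i=0}^{1}P_i=P_0$, $\circledast_{i=0}^{N}P_i=(\circledast_{i=0}^{N-1}P_i)\circledast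 P_{N-1}$; similarly $\bigwedge_{\alpha=0}^{K}Q_\alpha=Q_0\wedge\dots\wedge Q_{K-1}$. *)

theory Defs
  imports "HOL-Probability.Probability"
begin

text \<open>Memories are partial maps from variables to reals; a memory in Mem[S] has domain S.
  A distribution is a pair of its domain S and a (countably supported) pmf on memories.\<close>

type_synonym 'v mem = "'v \<Rightarrow> real option"
type_synonym 'v dist = "'v set \<times> 'v mem pmf"

definition dmn :: "'v dist \<Rightarrow> 'v set" where
  "dmn \<mu> = fst \<mu>"

definition wf_dist :: "'v dist \<Rightarrow> bool" where
  "wf_dist \<mu> \<longleftrightarrow> finite (fst \<mu>) \<and> (\<forall>m\<in>set_pmf (snd \<mu>). dom m = fst \<mu>)"

definition mems :: "'v set \<Rightarrow> 'v mem set" where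
  "mems A = {m. dom m = A}"

definition mem_le :: "'v set \<Rightarrow> 'v mem \<Rightarrow> 'v mem \<Rightarrow> bool" where
  "mem_le A m m' \<longleftrightarrow> (\<forall>v\<in>A. the (m v) \<le> the (m' v))"

definition mono_mem :: "'v set \<Rightarrow> ('v mem \<Rightarrow> real) \<Rightarrow> bool" where
  "mono_mem A g \<longleftrightarrow> (\<forall>m\<in>mems A. \<forall>m'\<in>mems A. mem_le A m m' \<longrightarrow> g m \<le> g m')"

definition anti_mem :: "'v set \<Rightarrow> ('v mem \<Rightarrow> real) \<Rightarrow> bool" where
  "anti_mem A g \<longleftrightarrow> (\<forall>m\<in>mems A. \<forall>m'\<in>mems A. mem_le A m m' \<longrightarrow> g m' \<le> g m)"

definition marg :: "'v set \<Rightarrow> 'v dist \<Rightarrow> 'v dist" where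
  "marg A \<mu> = (A, map_pmf (\<lambda>m. m |` A) (snd \<mu>))"

definition dist_le :: "'v dist \<Rightarrow> 'v dist \<Rightarrow> bool" where
  "dist_le \<mu> \<mu>' \<longleftrightarrow> dmn \<mu> \<subseteq> dmn \<mu>' \<and> marg (dmn \<mu>) \<mu>' = \<mu>"

definition is_partition :: "'v set set \<Rightarrow> bool" where
  "is_partition P \<longleftrightarrow> (\<forall>A\<in>P. A \<noteq> {}) \<and> (\<forall>A\<in>P. \<forall>B\<in>P. A \<noteq> B \<longrightarrow> A \<inter> B = {})"

definition coarsens :: "'v set set \<Rightarrow> 'v set set \<Rightarrow> bool" where
  "coarsens T S \<longleftrightarrow> is_partition T \<and> \<Union>T = \<Union>S \<and> (\<forall>B\<in>T. \<exists>F\<subseteq>S. B = \<Union>F)"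

text \<open>Partition-indexed negative association; expectations of nonnegative functions
  are taken in [0,\<infinity>] (nonnegative Lebesgue integral).\<close>
definition PNA :: "'v dist \<Rightarrow> 'v set set \<Rightarrow> bool" where
  "PNA \<mu> S \<longleftrightarrow>
    (\<forall>T (fs :: 'v set \<Rightarrow> 'v mem \<Rightarrow> real).
       coarsens T S \<and> (\<forall>A\<in>T. \<forall>m\<in>mems A. 0 \<le> fs A m) \<and>
       ((\<forall>A\<in>T. mono_mem A (fs A)) \<or> (\<forall>A\<in>T. anti_mem A (fs A))) \<longrightarrow>
       (\<integral>\<^sup>+ m. ennreal (\<Prod>A\<in>T. fs A (m |` A)) \<partial>measure_pmf (snd \<mu>))
         \<le> (\<Prod>A\<in>T. \<integral>\<^sup>+ m. ennreal (fs A (m |` A)) \<partial>measure_pmf (snd \<mu>)))"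

definition oplus :: "'v dist \<Rightarrow> 'v dist \<Rightarrow> 'v dist set" where
  "oplus \<mu>1 \<mu>2 =
    (if dmn \<mu>1 \<inter> dmn \<mu>2 \<noteq> {} then {}
     else {\<mu>. wf_dist \<mu> \<and> dmn \<mu> = dmn \<mu>1 \<union> dmn \<mu>2 \<and>
              marg (dmn \<mu>1) \<mu> = \<mu>1 \<and> marg (dmn \<mu>2) \<mu> = \<mu>2 \<and>
              (\<forall>S T. is_partition S \<and> \<Union>S \<subseteq> dmn \<mu>1 \<and> is_partition T \<and> \<Union>T \<subseteq> dmn \<mu>2 \<and>
                     PNA \<mu>1 S \<and> PNA \<mu>2 T \<longrightarrow> PNA \<mu> (S \<union> T))})"

datatype 'v expr = Var 'v | Fun "real list \<Rightarrow> real" "'v expr list"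

fun fv :: "'v expr \<Rightarrow> 'v set" where
  "fv (Var x) = {x}"
| "fv (Fun g es) = \<Union>(set (map fv es))"

fun eval :: "'v mem \<Rightarrow> 'v mem \<Rightarrow> 'v expr \<Rightarrow> real" where
  "eval \<sigma> m (Var x) = (case \<sigma> x of Some v \<Rightarrow> v | None \<Rightarrow> the (m x))"
| "eval \<sigma> m (Fun g es) = g (map (eval \<sigma> m) es)"

datatype 'v assn = Bnd 'v | Sim "'v expr" "'v expr" | Conj "'v assn" "'v assn" | Sep "'v assn" "'v assn"

fun sat :: "'v mem \<Rightarrow> 'v dist \<Rightarrow> 'v assn \<Rightarrow> bool" where
  "sat \<sigma> \<mu> (Bnd y) \<longleftrightarrow> y \<in> dom \<sigma> \<union> dmn \<mu>"
| "sat \<sigma> \<mu> (Sim e e') \<longleftrightarrow> fv e \<union> fv e' \<subseteq> dom \<sigma> \<union> dmn \<mu> \<and>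
      (\<forall>m\<in>set_pmf (snd \<mu>). eval \<sigma> m e = eval \<sigma> m e')"
| "sat \<sigma> \<mu> (Conj P Q) \<longleftrightarrow> sat \<sigma> \<mu> P \<and> sat \<sigma> \<mu> Q"
| "sat \<sigma> \<mu> (Sep P Q) \<longleftrightarrow> (\<exists>\<mu>' \<mu>1 \<mu>2. wf_dist \<mu>' \<and> wf_dist \<mu>1 \<and> wf_dist \<mu>2 \<and>
      dist_le \<mu>' \<mu> \<and> \<mu>' \<in> oplus \<mu>1 \<mu>2 \<and> sat \<sigma> \<mu>1 P \<and> sat \<sigma> \<mu>2 Q)"

text \<open>Iterated operators with the paper's convention: index N ranges over 0..N-1.
  (Only defined for N \<ge> 1 in the paper.)\<close>
fun bigsep :: "nat \<Rightarrow> (nat \<Rightarrow> 'v assn) \<Rightarrow> 'v assn" where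
  "bigsep 0 P = undefined"
| "bigsep (Suc 0) P = P 0"
| "bigsep (Suc (Suc n)) P = Sep (bigsep (Suc n) P) (P (Suc n))"

fun bigconj :: "nat \<Rightarrow> (nat \<Rightarrow> 'v assn) \<Rightarrow> 'v assn" where
  "bigconj 0 P = undefined"
| "bigconj (Suc 0) P = P 0"
| "bigconj (Suc (Suc n)) P = Conj (bigconj (Suc n) P) (P (Suc n))"

definition is_state :: "'v set \<Rightarrow> 'v set \<Rightarrow> 'v mem \<Rightarrow> 'v dist \<Rightarrow> bool" where
  "is_state DV RV \<sigma> \<mu> \<longleftrightarrow> finite (dom \<sigma>) \<and> dom \<sigma> \<subseteq> DV \<and> wf_dist \<mu> \<and> dmn \<mu> \<subseteq> RV"

definition mono_vec :: "nat \<Rightarrow> (real list \<Rightarrow> real) \<Rightarrow> bool" where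
  "mono_vec n g \<longleftrightarrow> (\<forall>u v. length u = n \<and> length v = n \<and> list_all2 (\<le>) u v \<longrightarrow> g u \<le> g v)"

definition anti_vec :: "nat \<Rightarrow> (real list \<Rightarrow> real) \<Rightarrow> bool" where
  "anti_vec n g \<longleftrightarrow> (\<forall>u v. length u = n \<and> length v = n \<and> list_all2 (\<le>) u v \<longrightarrow> g v \<le> g u)"

end

(* The separating conjunction of the x-groups yields, by induction along the iterated \<oplus>,
   pairwise disjoint sets D \<gamma> of randomized variables with x \<gamma> \<alpha> \<in> dom \<sigma> \<union> D \<gamma>, such that
   \<mu> is negatively associated for the partition into the nonempty D \<gamma>: each \<oplus> step adds one
   block through the PNA clause of \<oplus>, and PNA passes along \<sqsubseteq> since it only depends on
   marginals. On the support, y \<gamma> is the value of the monotone f \<gamma> at variables in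
   dom \<sigma> \<union> D \<gamma>. So for any partition of the y-variables, each block is a monotone function of
   the union of the corresponding D \<gamma>; these unions, completed by the remaining variables as
   one more block, coarsen the D-partition. Hence \<mu> is negatively associated for every
   partition of the randomized y's, and the marginals of \<mu> on growing sets of y's witness
   the iterated \<oplus> of the [y \<gamma>]. *)

theory Submission
  imports Defs
begin

lemma dmn_marg [simp]: "dmn (marg A \<nu>) = A"
  by (simp add: marg_def dmn_def)

lemma dom_of_support:
  assumes "wf_dist \<nu>" "m \<in> set_pmf (snd \<nu>)"
  shows "dom m = dmn \<nu>"
  using assms by (simp add: wf_dist_def dmn_def)

lemma wf_marg:
  assumes "wf_dist \<nu>" "A \<subseteq> dmn \<nu>"
  shows "wf_dist (marg A \<nu>)"
  using assms finite_subset[OF assms(2)] dom_of_support[OF assms(1)]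
  by (auto simp: wf_dist_def marg_def dmn_def)

lemma marg_marg: "A \<subseteq> B \<Longrightarrow> marg A (marg B \<nu>) = marg A \<nu>"
  by (simp add: marg_def map_pmf_comp Int_absorb1 Int_absorb2)

lemma dist_le_marg: "A \<subseteq> dmn \<nu> \<Longrightarrow> dist_le (marg A \<nu>) \<nu>"
  unfolding dist_le_def by simp

lemma nn_integral_marg:
  "(\<integral>\<^sup>+ m. h m \<partial>measure_pmf (snd (marg A \<nu>))) = (\<integral>\<^sup>+ m. h (m |` A) \<partial>measure_pmf (snd \<nu>))"
  by (simp add: marg_def)

lemma coarsens_subset: "coarsens T S \<Longrightarrow> B \<in> T \<Longrightarrow> B \<subseteq> \<Union>S"
  unfolding coarsens_def by blast

lemma PNA_marg_iff:
  assumes "\<Union>S \<subseteq> A"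
  shows "PNA (marg A \<nu>) S \<longleftrightarrow> PNA \<nu> S"
proof -
  have inter: "A \<inter> B = B" if "coarsens T S" "B \<in> T" for T B
    using coarsens_subset[OF that] assms by blast
  then have restrict: "(\<Prod>B\<in>T. g B (m |` (A \<inter> B))) = (\<Prod>B\<in>T. g B (m |` B))"
    if "coarsens T S" for T and g :: "'a set \<Rightarrow> 'a mem \<Rightarrow> 'b::comm_monoid_mult" and m
    using that by (intro prod.cong) auto
  show ?thesis
    unfolding PNA_def nn_integral_marg restrict_restrict
    by (intro all_cong1 imp_cong refl) (clarsimp simp: restrict inter cong: prod.cong)
qed

lemma PNA_dist_le:
  assumes "dist_le \<nu>' \<nu>" "\<Union>S \<subseteq> dmn \<nu>'" "PNA \<nu>' S"
  shows "PNA \<nu> S"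
  using assms PNA_marg_iff[of S "dmn \<nu>'" \<nu>] by (simp add: dist_le_def)

lemma PNA_single_block: "PNA \<nu> ({A} - {{}})"
  unfolding PNA_def
proof (intro allI impI)
  fix T :: "'a set set" and fs :: "'a set \<Rightarrow> 'a mem \<Rightarrow> real"
  assume "coarsens T ({A} - {{}}) \<and> (\<forall>B\<in>T. \<forall>m\<in>mems B. 0 \<le> fs B m) \<and>
    ((\<forall>B\<in>T. mono_mem B (fs B)) \<or> (\<forall>B\<in>T. anti_mem B (fs B)))"
  then have T: "\<forall>B\<in>T. B \<noteq> {} \<and> (\<exists>F\<subseteq>{A} - {{}}. B = \<Union>F)"
    unfolding coarsens_def is_partition_def by simp
  have "T \<subseteq> {A}"
  proof
    fix B assume "B \<in> T"
    with T have "B \<noteq> {}" and "\<exists>F\<subseteq>{A} - {{}}. B = \<Union>F" by auto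
    then show "B \<in> {A}" by (auto simp: subset_singleton_iff)
  qed
  then have "T = {} \<or> T = {A}"
    by (simp add: subset_singleton_iff)
  then show "(\<integral>\<^sup>+ m. ennreal (\<Prod>B\<in>T. fs B (m |` B)) \<partial>measure_pmf (snd \<nu>))
      \<le> (\<Prod>B\<in>T. \<integral>\<^sup>+ m. ennreal (fs B (m |` B)) \<partial>measure_pmf (snd \<nu>))"
    by (elim disjE) (simp_all add: measure_pmf.emeasure_space_1)
qed

lemma PNAD:
  assumes "PNA \<nu> S" "coarsens T S" "\<forall>A\<in>T. \<forall>m\<in>mems A. 0 \<le> fs A m"
    "(\<forall>A\<in>T. mono_mem A (fs A)) \<or> (\<forall>A\<in>T. anti_mem A (fs A))"
  shows "(\<integral>\<^sup>+ m. ennreal (\<Prod>A\<in>T. fs A (m |` A)) \<partial>measure_pmf (snd \<nu>))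
      \<le> (\<Prod>A\<in>T. \<integral>\<^sup>+ m. ennreal (fs A (m |` A)) \<partial>measure_pmf (snd \<nu>))"
  using assms unfolding PNA_def by blast

section \<open>Negative association of groups of blocks\<close>

lemma is_partition_block_subset:
  assumes "is_partition S" "A \<in> S" "F \<subseteq> S" "A \<inter> \<Union>F \<noteq> {}"
  shows "A \<subseteq> \<Union>F"
proof -
  obtain A' where A': "A' \<in> F" "A \<inter> A' \<noteq> {}"
    using assms(4) by blast
  have "A = A'"
  proof (rule ccontr)
    assume "A \<noteq> A'"
    moreover have "A' \<in> S" using A'(1) assms(3) by blast
    ultimately have "A \<inter> A' = {}" using assms(1,2) unfolding is_partition_def by blast
    with A'(2) show False ..
  qed
  with A'(1) show ?thesis by auto
qed

lemma is_partition_image: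
  assumes "disjoint_family_on D I"
  shows "is_partition (D ` I - {{}})"
  unfolding is_partition_def
proof (intro conjI ballI impI)
  fix A B assume "A \<in> D ` I - {{}}" "B \<in> D ` I - {{}}" "A \<noteq> B"
  then obtain i j where "i \<in> I" "j \<in> I" "A = D i" "B = D j" "i \<noteq> j" by blast
  then show "A \<inter> B = {}" using disjoint_family_onD[OF assms] by simp
qed auto

lemma remainder_eq_Union_blocks:
  assumes S: "is_partition S" and unions: "\<forall>i\<in>I. \<exists>F\<subseteq>S. E i = \<Union>F"
  shows "\<Union>S - (\<Union>i\<in>I. E i) = \<Union>{A \<in> S. A \<inter> (\<Union>i\<in>I. E i) = {}}"
proof
  show "\<Union>S - (\<Union>i\<in>I. E i) \<subseteq> \<Union>{A \<in> S. A \<inter> (\<Union>i\<in>I. E i) = {}}"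
  proof
    fix v assume "v \<in> \<Union>S - (\<Union>i\<in>I. E i)"
    then obtain A where A: "A \<in> S" "v \<in> A" and v: "v \<notin> (\<Union>i\<in>I. E i)"
      by blast
    have "A \<inter> E i = {}" if i: "i \<in> I" for i
    proof -
      obtain F where "F \<subseteq> S" "E i = \<Union>F"
        using bspec[OF unions i] by (elim exE conjE)
      then have "A \<subseteq> E i" if "A \<inter> E i \<noteq> {}"
        using is_partition_block_subset[OF S A(1)] that by simp
      then show ?thesis
        using A(2) v i by blast
    qed
    with A show "v \<in> \<Union>{A \<in> S. A \<inter> (\<Union>i\<in>I. E i) = {}}" by blast
  qed
qed blast

lemma coarsens_with_remainder:
  fixes E :: "'i \<Rightarrow> 'v set"
  assumes S: "is_partition S" and disj: "disjoint_family_on E I"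
    and nonempty: "\<forall>i\<in>I. E i \<noteq> {}" and unions: "\<forall>i\<in>I. \<exists>F\<subseteq>S. E i = \<Union>F"
  shows "coarsens (E ` I \<union> ({\<Union>S - (\<Union>i\<in>I. E i)} - {{}})) S"
proof -
  define R where "R = \<Union>S - (\<Union>i\<in>I. E i)"
  have R_blocks: "R = \<Union>{A \<in> S. A \<inter> (\<Union>i\<in>I. E i) = {}}"
    unfolding R_def using S unions by (rule remainder_eq_Union_blocks)
  have E_disj: "E i \<inter> E j = {}" if "i \<in> I" "j \<in> I" "E i \<noteq> E j" for i j
    using disjoint_family_onD[OF disj that(1,2)] that(3) by auto
  have E_sub: "E i \<subseteq> \<Union>S" if "i \<in> I" for i
    using bspec[OF unions that] by (elim exE conjE) blast
  have "is_partition (E ` I \<union> ({R} - {{}}))"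
    unfolding is_partition_def
  proof (intro conjI ballI impI)
    fix A assume "A \<in> E ` I \<union> ({R} - {{}})"
    then show "A \<noteq> {}" using nonempty by auto
  next
    fix A B assume "A \<in> E ` I \<union> ({R} - {{}})" "B \<in> E ` I \<union> ({R} - {{}})" "A \<noteq> B"
    moreover have "R \<inter> E i = {}" "E i \<inter> R = {}" if "i \<in> I" for i
      unfolding R_def using that by auto
    ultimately show "A \<inter> B = {}"
      by (elim UnE imageE DiffE; simp add: E_disj)
  qed
  moreover have "\<Union>(E ` I \<union> ({R} - {{}})) = \<Union>S"
  proof -
    have "\<Union>(E ` I \<union> ({R} - {{}})) = (\<Union>i\<in>I. E i) \<union> R"
      by auto
    also have "\<dots> = \<Union>S"
      using E_sub unfolding R_def by blast
    finally show ?thesis .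
  qed
  moreover have "\<forall>B\<in>E ` I \<union> ({R} - {{}}). \<exists>F\<subseteq>S. B = \<Union>F"
  proof
    fix B assume B: "B \<in> E ` I \<union> ({R} - {{}})"
    show "\<exists>F\<subseteq>S. B = \<Union>F"
    proof (cases "B \<in> E ` I")
      case True
      then obtain i where "i \<in> I" "B = E i" by blast
      then show ?thesis using bspec[OF unions \<open>i \<in> I\<close>] by simp
    next
      case False
      with B have "B = R" by simp
      with R_blocks show ?thesis by (intro exI[of _ "{A \<in> S. A \<inter> (\<Union>i\<in>I. E i) = {}}"]) simp
    qed
  qed
  ultimately have "coarsens (E ` I \<union> ({R} - {{}})) S"
    unfolding coarsens_def by (intro conjI)
  then show ?thesis
    unfolding R_def .
qed

text \<open>The variables of \<open>\<Union>S\<close> not covered by any \<open>E i\<close> form an extra block that carries the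
  constant function 1, so that the groups \<open>E i\<close> become the blocks of a coarsening of \<open>S\<close>.\<close>
lemma PNA_grouped_nonempty:
  fixes E :: "'i \<Rightarrow> 'v set" and g :: "'i \<Rightarrow> 'v mem \<Rightarrow> real"
  assumes PNA: "PNA \<nu> S" and S: "is_partition S" and "finite I"
    and disj: "disjoint_family_on E I" and nonempty: "\<forall>i\<in>I. E i \<noteq> {}"
    and unions: "\<forall>i\<in>I. \<exists>F\<subseteq>S. E i = \<Union>F"
    and nonneg: "\<forall>i\<in>I. \<forall>m\<in>mems (E i). 0 \<le> g i m"
    and mono: "(\<forall>i\<in>I. mono_mem (E i) (g i)) \<or> (\<forall>i\<in>I. anti_mem (E i) (g i))"
  shows "(\<integral>\<^sup>+ m. ennreal (\<Prod>i\<in>I. g i (m |` E i)) \<partial>measure_pmf (snd \<nu>))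
      \<le> (\<Prod>i\<in>I. \<integral>\<^sup>+ m. ennreal (g i (m |` E i)) \<partial>measure_pmf (snd \<nu>))"
proof -
  define R where "R = \<Union>S - (\<Union>i\<in>I. E i)"
  define T where "T = E ` I \<union> ({R} - {{}})"
  define fs where "fs A = (if A \<in> E ` I then g (inv_into I E A) else (\<lambda>_. 1))" for A
  have coarse: "coarsens T S"
    unfolding T_def R_def by (rule coarsens_with_remainder[OF S disj nonempty unions])
  have inj: "inj_on E I"
    using disjoint_family_onD[OF disj] nonempty by (metis inf.idem inj_onI)
  then have fs_E: "fs (E i) = g i" if "i \<in> I" for i
    using that by (simp add: fs_def)
  have "R \<notin> E ` I" if "R \<noteq> {}"
    using that unfolding R_def by blast
  then have fs_R: "fs R = (\<lambda>_. 1)" if "R \<noteq> {}"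
    using that by (simp add: fs_def)
  have PNA_T: "(\<integral>\<^sup>+ m. ennreal (\<Prod>A\<in>T. fs A (m |` A)) \<partial>measure_pmf (snd \<nu>))
      \<le> (\<Prod>A\<in>T. \<integral>\<^sup>+ m. ennreal (fs A (m |` A)) \<partial>measure_pmf (snd \<nu>))"
  proof (rule PNAD[OF PNA coarse])
    show "\<forall>A\<in>T. \<forall>m\<in>mems A. 0 \<le> fs A m"
      using nonneg fs_R unfolding T_def by (force simp: fs_E)
    show "(\<forall>A\<in>T. mono_mem A (fs A)) \<or> (\<forall>A\<in>T. anti_mem A (fs A))"
      using mono fs_R unfolding T_def by (force simp: fs_E mono_mem_def anti_mem_def)
  qed
  have reindex: "(\<Prod>A\<in>T. \<phi> A (fs A)) = (\<Prod>i\<in>I. \<phi> (E i) (g i))"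
    if "\<And>A. \<phi> A (\<lambda>_. 1) = 1" for \<phi> :: "'v set \<Rightarrow> ('v mem \<Rightarrow> real) \<Rightarrow> 'b::comm_monoid_mult"
  proof -
    have "(\<Prod>A\<in>T. \<phi> A (fs A)) = (\<Prod>A\<in>E ` I. \<phi> A (fs A))"
      using \<open>finite I\<close> fs_R that by (intro prod.mono_neutral_right) (force simp: T_def)+
    also have "\<dots> = (\<Prod>i\<in>I. \<phi> (E i) (g i))"
      using fs_E by (simp add: prod.reindex[OF inj])
    finally show ?thesis .
  qed
  show ?thesis
    using PNA_T reindex[of "\<lambda>A h. h (m |` A)" for m]
      reindex[of "\<lambda>A h. \<integral>\<^sup>+ m. ennreal (h (m |` A)) \<partial>measure_pmf (snd \<nu>)"]
    by (simp add: measure_pmf.emeasure_space_1)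
qed

lemma PNA_grouped:
  fixes E :: "'i \<Rightarrow> 'v set" and g :: "'i \<Rightarrow> 'v mem \<Rightarrow> real"
  assumes PNA: "PNA \<nu> S" and S: "is_partition S" and fin: "finite I"
    and disj: "disjoint_family_on E I" and unions: "\<forall>i\<in>I. \<exists>F\<subseteq>S. E i = \<Union>F"
    and nonneg: "\<forall>i\<in>I. \<forall>m\<in>mems (E i). 0 \<le> g i m"
    and mono: "(\<forall>i\<in>I. mono_mem (E i) (g i)) \<or> (\<forall>i\<in>I. anti_mem (E i) (g i))"
  shows "(\<integral>\<^sup>+ m. ennreal (\<Prod>i\<in>I. g i (m |` E i)) \<partial>measure_pmf (snd \<nu>))
      \<le> (\<Prod>i\<in>I. \<integral>\<^sup>+ m. ennreal (g i (m |` E i)) \<partial>measure_pmf (snd \<nu>))"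
proof -
  define I0 where "I0 = {i \<in> I. E i = {}}"
  define c where "c = (\<Prod>i\<in>I0. g i Map.empty)"
  have "I0 \<subseteq> I" "finite I0"
    using fin unfolding I0_def by auto
  have g_empty: "0 \<le> g i Map.empty" if "i \<in> I0" for i
    using bspec[OF nonneg, of i] that by (simp add: I0_def mems_def)
  then have "0 \<le> c"
    unfolding c_def by (intro prod_nonneg) auto
  have "(\<Prod>i\<in>I0. g i (m |` E i)) = c" for m
    unfolding c_def I0_def by (intro prod.cong) auto
  then have split_lhs: "(\<Prod>i\<in>I. g i (m |` E i)) = c * (\<Prod>i\<in>I - I0. g i (m |` E i))" for m
    using prod.subset_diff[OF \<open>I0 \<subseteq> I\<close> fin, where g="\<lambda>i. g i (m |` E i)"] by simp
  have "(\<Prod>i\<in>I0. \<integral>\<^sup>+ m. ennreal (g i (m |` E i)) \<partial>measure_pmf (snd \<nu>)) = (\<Prod>i\<in>I0. ennreal (g i Map.empty))"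
    unfolding I0_def by (intro prod.cong) (auto simp: measure_pmf.emeasure_space_1)
  also have "\<dots> = ennreal c"
    unfolding c_def using g_empty by (intro prod_ennreal) auto
  finally have split_rhs: "(\<Prod>i\<in>I. \<integral>\<^sup>+ m. ennreal (g i (m |` E i)) \<partial>measure_pmf (snd \<nu>))
      = ennreal c * (\<Prod>i\<in>I - I0. \<integral>\<^sup>+ m. ennreal (g i (m |` E i)) \<partial>measure_pmf (snd \<nu>))"
    using prod.subset_diff[OF \<open>I0 \<subseteq> I\<close> fin,
        where g="\<lambda>i. \<integral>\<^sup>+ m. ennreal (g i (m |` E i)) \<partial>measure_pmf (snd \<nu>)"]
    by (simp add: mult.commute)
  have "(\<integral>\<^sup>+ m. ennreal (\<Prod>i\<in>I - I0. g i (m |` E i)) \<partial>measure_pmf (snd \<nu>))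
      \<le> (\<Prod>i\<in>I - I0. \<integral>\<^sup>+ m. ennreal (g i (m |` E i)) \<partial>measure_pmf (snd \<nu>))"
    using PNA S fin disj unions nonneg mono
    by (intro PNA_grouped_nonempty) (auto simp: I0_def disjoint_family_on_def)
  then show ?thesis
    unfolding split_lhs split_rhs ennreal_mult'[OF \<open>0 \<le> c\<close>]
    by (simp add: nn_integral_cmult mult_left_mono)
qed

lemma eval_restrict:
  "fv e \<subseteq> dom \<sigma> \<union> A \<Longrightarrow> eval \<sigma> (m |` A) e = eval \<sigma> m e"
proof (induction e)
  case (Var x)
  then show ?case by (auto split: option.split)
next
  case (Fun g es)
  have "eval \<sigma> (m |` A) e = eval \<sigma> m e" if "e \<in> set es" for e
    using Fun.IH[OF that] Fun.prems that by auto
  then show ?case by (simp cong: map_cong)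
qed

lemma list_all2_eval_vars:
  assumes "mem_le A m m'" "set vs \<subseteq> dom \<sigma> \<union> A"
  shows "list_all2 (\<le>) (map (\<lambda>v. eval \<sigma> m (Var v)) vs) (map (\<lambda>v. eval \<sigma> m' (Var v)) vs)"
  using assms by (auto simp: list.rel_map list_all2_same mem_le_def split: option.split)

lemma mono_mem_eval_Fun:
  assumes "mono_vec (length vs) g" "set vs \<subseteq> dom \<sigma> \<union> A"
  shows "mono_mem A (\<lambda>m. eval \<sigma> m (Fun g (map Var vs)))"
  using assms list_all2_eval_vars[OF _ assms(2)] by (simp add: mono_mem_def mono_vec_def comp_def)

lemma anti_mem_eval_Fun:
  assumes "anti_vec (length vs) g" "set vs \<subseteq> dom \<sigma> \<union> A"
  shows "anti_mem A (\<lambda>m. eval \<sigma> m (Fun g (map Var vs)))"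
  using assms list_all2_eval_vars[OF _ assms(2)] by (simp add: anti_mem_def anti_vec_def comp_def)

lemma mono_or_anti_eval_Fun:
  assumes "(\<forall>i\<in>I. mono_vec (length (vs i)) (g i)) \<or> (\<forall>i\<in>I. anti_vec (length (vs i)) (g i))"
    and "\<forall>i\<in>I. set (vs i) \<subseteq> dom \<sigma> \<union> A i"
  shows "(\<forall>i\<in>I. mono_mem (A i) (\<lambda>m. eval \<sigma> m (Fun (g i) (map Var (vs i))))) \<or>
    (\<forall>i\<in>I. anti_mem (A i) (\<lambda>m. eval \<sigma> m (Fun (g i) (map Var (vs i)))))"
  using assms(1)
proof (elim disjE)
  assume "\<forall>i\<in>I. mono_vec (length (vs i)) (g i)"
  then show ?thesis
    using assms(2) by (intro disjI1 ballI mono_mem_eval_Fun) auto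
next
  assume "\<forall>i\<in>I. anti_vec (length (vs i)) (g i)"
  then show ?thesis
    using assms(2) by (intro disjI2 ballI anti_mem_eval_Fun) auto
qed

lemma restrict_mems: "m \<in> mems A \<Longrightarrow> C \<subseteq> A \<Longrightarrow> m |` C \<in> mems C"
  by (auto simp: mems_def)

lemma mem_le_restrict: "mem_le A m m' \<Longrightarrow> C \<subseteq> A \<Longrightarrow> mem_le C (m |` C) (m' |` C)"
  by (auto simp: mem_le_def)

lemma mono_mem_restrict: "mono_mem C g \<Longrightarrow> C \<subseteq> A \<Longrightarrow> mono_mem A (\<lambda>m. g (m |` C))"
  unfolding mono_mem_def by (metis restrict_mems mem_le_restrict)

lemma anti_mem_restrict: "anti_mem C g \<Longrightarrow> C \<subseteq> A \<Longrightarrow> anti_mem A (\<lambda>m. g (m |` C))"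
  unfolding anti_mem_def by (metis restrict_mems mem_le_restrict)

definition mem_of :: "'v set \<Rightarrow> ('v \<Rightarrow> real) \<Rightarrow> 'v mem" where
  "mem_of B r = (\<lambda>v. if v \<in> B then Some (r v) else None)"

lemma mem_of_mems [simp]: "mem_of B r \<in> mems B"
  by (auto simp: mem_of_def mems_def split: if_splits)

lemma mem_le_mem_of [simp]: "mem_le B (mem_of B r) (mem_of B r') \<longleftrightarrow> (\<forall>v\<in>B. r v \<le> r' v)"
  by (simp add: mem_le_def mem_of_def)

lemma mono_mem_mem_of:
  assumes "\<forall>v\<in>B. mono_mem A (H v)"
  shows "mono_mem B F \<Longrightarrow> mono_mem A (\<lambda>m. F (mem_of B (\<lambda>v. H v m)))"
    and "anti_mem B F \<Longrightarrow> anti_mem A (\<lambda>m. F (mem_of B (\<lambda>v. H v m)))"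
  using assms by (simp_all add: mono_mem_def anti_mem_def)

lemma anti_mem_mem_of:
  assumes "\<forall>v\<in>B. anti_mem A (H v)"
  shows "mono_mem B F \<Longrightarrow> anti_mem A (\<lambda>m. F (mem_of B (\<lambda>v. H v m)))"
    and "anti_mem B F \<Longrightarrow> mono_mem A (\<lambda>m. F (mem_of B (\<lambda>v. H v m)))"
  using assms by (simp_all add: mono_mem_def anti_mem_def)

section \<open>Monotone images of negatively associated blocks\<close>

lemma disjoint_family_on_Union_preimage:
  assumes disj: "disjoint_family_on D I" and T: "is_partition T"
  shows "disjoint_family_on (\<lambda>B. \<Union>(D ` {i \<in> I. y i \<in> B})) T"
  unfolding disjoint_family_on_def
proof (intro ballI impI)
  fix B B' assume "B \<in> T" "B' \<in> T" "B \<noteq> B'"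
  with T have BB': "B \<inter> B' = {}" unfolding is_partition_def by blast
  show "\<Union>(D ` {i \<in> I. y i \<in> B}) \<inter> \<Union>(D ` {i \<in> I. y i \<in> B'}) = {}"
  proof (rule ccontr)
    assume "\<Union>(D ` {i \<in> I. y i \<in> B}) \<inter> \<Union>(D ` {i \<in> I. y i \<in> B'}) \<noteq> {}"
    then obtain i j where ij: "i \<in> I" "j \<in> I" "y i \<in> B" "y j \<in> B'" "D i \<inter> D j \<noteq> {}"
      by blast
    with BB' have "i \<noteq> j" by auto
    with ij show False using disjoint_family_onD[OF disj] by simp
  qed
qed

lemma Union_image_eq_Union_blocks:
  assumes "J \<subseteq> I"
  shows "\<exists>F\<subseteq>D ` I - {{}}. \<Union>(D ` J) = \<Union>F"
proof (intro exI conjI)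
  show "D ` J - {{}} \<subseteq> D ` I - {{}}"
    using assms by auto
  show "\<Union>(D ` J) = \<Union>(D ` J - {{}})"
    by (auto simp del: ex_in_conv simp: ex_in_conv[symmetric])
qed

text \<open>Each block \<open>B\<close> of \<open>y\<close>-variables is, on the support, the monotone image of the variables in
  \<open>E B\<close>, the union of the blocks \<open>D i\<close> with \<open>y i \<in> B\<close>; these unions are disjoint, so the
  inequality for the groups \<open>E B\<close> transfers to the blocks \<open>B\<close>.\<close>
lemma NA_monotone_image:
  fixes D :: "'i \<Rightarrow> 'v set" and y :: "'i \<Rightarrow> 'v" and h :: "'i \<Rightarrow> 'v mem \<Rightarrow> real"
  assumes wf: "wf_dist \<nu>" and PNA: "PNA \<nu> (D ` I - {{}})" and disj: "disjoint_family_on D I"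
    and val: "\<And>i m. i \<in> I \<Longrightarrow> y i \<in> dmn \<nu> \<Longrightarrow> m \<in> set_pmf (snd \<nu>) \<Longrightarrow>
      m (y i) = Some (h i (m |` D i))"
    and mono: "(\<forall>i\<in>I. mono_mem (D i) (h i)) \<or> (\<forall>i\<in>I. anti_mem (D i) (h i))"
    and T: "is_partition T" "\<Union>T \<subseteq> y ` I \<inter> dmn \<nu>"
    and nonneg: "\<forall>B\<in>T. \<forall>m\<in>mems B. 0 \<le> fs B m"
    and fs_mono: "(\<forall>B\<in>T. mono_mem B (fs B)) \<or> (\<forall>B\<in>T. anti_mem B (fs B))"
  shows "(\<integral>\<^sup>+ m. ennreal (\<Prod>B\<in>T. fs B (m |` B)) \<partial>measure_pmf (snd \<nu>))
      \<le> (\<Prod>B\<in>T. \<integral>\<^sup>+ m. ennreal (fs B (m |` B)) \<partial>measure_pmf (snd \<nu>))"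
proof -
  define idx where "idx v = inv_into I y v" for v
  define E where "E B = \<Union>(D ` {i \<in> I. y i \<in> B})" for B
  define \<Phi> where "\<Phi> B m = mem_of B (\<lambda>v. h (idx v) (m |` D (idx v)))" for B m
  have idx: "idx v \<in> I" "y (idx v) = v" "D (idx v) \<subseteq> E B" if "B \<in> T" "v \<in> B" for B v
  proof -
    have "v \<in> y ` I" using T(2) that by blast
    then show "idx v \<in> I" "y (idx v) = v"
      unfolding idx_def by (simp_all add: inv_into_into f_inv_into_f)
    then show "D (idx v) \<subseteq> E B"
      unfolding E_def using that by auto
  qed
  have "finite (dmn \<nu>)"
    using wf by (simp add: wf_dist_def dmn_def)
  with T(2) have "finite T"
    by (meson finite_UnionD finite_subset le_infE)
  moreover have "disjoint_family_on E T"
    unfolding E_def using disj T(1) by (rule disjoint_family_on_Union_preimage)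
  moreover have "\<forall>B\<in>T. \<exists>F\<subseteq>D ` I - {{}}. E B = \<Union>F"
    unfolding E_def by (auto intro: Union_image_eq_Union_blocks)
  moreover have "\<forall>B\<in>T. \<forall>m\<in>mems (E B). 0 \<le> fs B (\<Phi> B m)"
    using nonneg by (simp add: \<Phi>_def)
  moreover have "(\<forall>B\<in>T. mono_mem (E B) (\<lambda>m. fs B (\<Phi> B m))) \<or> (\<forall>B\<in>T. anti_mem (E B) (\<lambda>m. fs B (\<Phi> B m)))"
    using mono
  proof (elim disjE)
    assume "\<forall>i\<in>I. mono_mem (D i) (h i)"
    then have "\<forall>v\<in>B. mono_mem (E B) (\<lambda>m. h (idx v) (m |` D (idx v)))" if "B \<in> T" for B
      using idx[OF that] by (blast intro: mono_mem_restrict)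
    from mono_mem_mem_of[OF this] fs_mono show ?thesis
      unfolding \<Phi>_def by blast
  next
    assume "\<forall>i\<in>I. anti_mem (D i) (h i)"
    then have "\<forall>v\<in>B. anti_mem (E B) (\<lambda>m. h (idx v) (m |` D (idx v)))" if "B \<in> T" for B
      using idx[OF that] by (blast intro: anti_mem_restrict)
    from anti_mem_mem_of[OF this] fs_mono show ?thesis
      unfolding \<Phi>_def by blast
  qed
  ultimately have grouped: "(\<integral>\<^sup>+ m. ennreal (\<Prod>B\<in>T. fs B (\<Phi> B (m |` E B))) \<partial>measure_pmf (snd \<nu>))
      \<le> (\<Prod>B\<in>T. \<integral>\<^sup>+ m. ennreal (fs B (\<Phi> B (m |` E B))) \<partial>measure_pmf (snd \<nu>))"
    by (rule PNA_grouped[OF PNA is_partition_image[OF disj], where g = "\<lambda>B m. fs B (\<Phi> B m)"])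
  have "\<Phi> B (m |` E B) = m |` B" if "B \<in> T" "m \<in> set_pmf (snd \<nu>)" for B m
  proof
    fix v
    show "\<Phi> B (m |` E B) v = (m |` B) v"
    proof (cases "v \<in> B")
      case True
      have "v \<in> dmn \<nu>" using T(2) that(1) True by blast
      then have "m v = Some (h (idx v) (m |` D (idx v)))"
        using val[of "idx v" m] idx(1,2)[OF that(1) True] that(2) by simp
      with True idx(3)[OF that(1) True] show ?thesis
        unfolding \<Phi>_def mem_of_def by (simp add: Int_absorb1)
    qed (simp add: \<Phi>_def mem_of_def)
  qed
  then have "(\<integral>\<^sup>+ m. ennreal (\<Prod>B\<in>T. fs B (\<Phi> B (m |` E B))) \<partial>measure_pmf (snd \<nu>))
      = (\<integral>\<^sup>+ m. ennreal (\<Prod>B\<in>T. fs B (m |` B)) \<partial>measure_pmf (snd \<nu>))"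
    and "(\<Prod>B\<in>T. \<integral>\<^sup>+ m. ennreal (fs B (\<Phi> B (m |` E B))) \<partial>measure_pmf (snd \<nu>))
      = (\<Prod>B\<in>T. \<integral>\<^sup>+ m. ennreal (fs B (m |` B)) \<partial>measure_pmf (snd \<nu>))"
    by (intro nn_integral_cong_AE AE_pmfI arg_cong[where f = ennreal] prod.cong refl; simp)+
  with grouped show ?thesis
    by simp
qed

lemma PNA_monotone_image:
  fixes D :: "'i \<Rightarrow> 'v set" and y :: "'i \<Rightarrow> 'v" and h :: "'i \<Rightarrow> 'v mem \<Rightarrow> real"
  assumes "wf_dist \<nu>" "PNA \<nu> (D ` I - {{}})" "disjoint_family_on D I"
    and "\<And>i m. i \<in> I \<Longrightarrow> y i \<in> dmn \<nu> \<Longrightarrow> m \<in> set_pmf (snd \<nu>) \<Longrightarrow>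
      m (y i) = Some (h i (m |` D i))"
    and "(\<forall>i\<in>I. mono_mem (D i) (h i)) \<or> (\<forall>i\<in>I. anti_mem (D i) (h i))"
    and P: "\<Union>P \<subseteq> y ` I \<inter> dmn \<nu>"
  shows "PNA \<nu> P"
  unfolding PNA_def
proof (intro allI impI, elim conjE)
  fix T :: "'v set set" and fs :: "'v set \<Rightarrow> 'v mem \<Rightarrow> real"
  assume "coarsens T P" "\<forall>A\<in>T. \<forall>m\<in>mems A. 0 \<le> fs A m"
    "(\<forall>A\<in>T. mono_mem A (fs A)) \<or> (\<forall>A\<in>T. anti_mem A (fs A))"
  moreover from \<open>coarsens T P\<close> P have "is_partition T" "\<Union>T \<subseteq> y ` I \<inter> dmn \<nu>"
    unfolding coarsens_def by auto
  ultimately show "(\<integral>\<^sup>+ m. ennreal (\<Prod>A\<in>T. fs A (m |` A)) \<partial>measure_pmf (snd \<nu>))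
      \<le> (\<Prod>A\<in>T. \<integral>\<^sup>+ m. ennreal (fs A (m |` A)) \<partial>measure_pmf (snd \<nu>))"
    using assms by (intro NA_monotone_image[where D = D and y = y and h = h and I = I]) auto
qed

section \<open>Separating conjunctions\<close>

lemma in_oplusD:
  assumes "\<mu> \<in> oplus \<mu>1 \<mu>2"
  shows "dmn \<mu>1 \<inter> dmn \<mu>2 = {}" "dmn \<mu> = dmn \<mu>1 \<union> dmn \<mu>2"
    "\<And>S T. is_partition S \<Longrightarrow> \<Union>S \<subseteq> dmn \<mu>1 \<Longrightarrow> is_partition T \<Longrightarrow> \<Union>T \<subseteq> dmn \<mu>2 \<Longrightarrow>
      PNA \<mu>1 S \<Longrightarrow> PNA \<mu>2 T \<Longrightarrow> PNA \<mu> (S \<union> T)"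
  using assms unfolding oplus_def by (simp_all split: if_split_asm)

lemma disjoint_family_on_extend:
  assumes D: "disjoint_family_on D {..<n}" and "\<forall>\<gamma><n. D \<gamma> \<subseteq> X" and "X \<inter> A = {}"
  shows "disjoint_family_on (D(n := A)) {..<Suc n}"
  unfolding disjoint_family_on_def
proof (intro ballI impI)
  fix i j assume "i \<in> {..<Suc n}" "j \<in> {..<Suc n}" "i \<noteq> j"
  then consider "i < n" "j < n" | "i = n" "j < n" | "i < n" "j = n"
    by fastforce
  then show "(D(n := A)) i \<inter> (D(n := A)) j = {}"
  proof cases
    case 1
    then show ?thesis
      using disjoint_family_onD[OF D] \<open>i \<noteq> j\<close> by simp
  qed (use assms in auto)
qed

lemma sat_bigsep_PNA_regions:
  assumes "wf_dist \<nu>" "sat \<sigma> \<nu> (bigsep (Suc n) P)"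
  shows "\<exists>D. (\<forall>\<gamma><Suc n. D \<gamma> \<subseteq> dmn \<nu>) \<and> disjoint_family_on D {..<Suc n} \<and>
    PNA \<nu> (D ` {..<Suc n} - {{}}) \<and>
    (\<forall>\<gamma><Suc n. \<exists>\<nu>\<^sub>\<gamma>. wf_dist \<nu>\<^sub>\<gamma> \<and> dmn \<nu>\<^sub>\<gamma> = D \<gamma> \<and> sat \<sigma> \<nu>\<^sub>\<gamma> (P \<gamma>))"
  using assms
proof (induction n arbitrary: \<nu>)
  case 0
  have "(\<lambda>_. dmn \<nu>) ` {..<Suc 0} = {dmn \<nu>}"
    by auto
  then show ?case
  proof (intro exI[of _ "\<lambda>_. dmn \<nu>"] conjI)
    show "disjoint_family_on (\<lambda>_. dmn \<nu>) {..<Suc 0}"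
      by (simp add: disjoint_family_on_def)
    show "\<forall>\<gamma><Suc 0. \<exists>\<nu>\<^sub>\<gamma>. wf_dist \<nu>\<^sub>\<gamma> \<and> dmn \<nu>\<^sub>\<gamma> = dmn \<nu> \<and> sat \<sigma> \<nu>\<^sub>\<gamma> (P \<gamma>)"
      using 0 by (intro allI impI exI[of _ \<nu>]) simp
  qed (simp_all add: PNA_single_block)
next
  case (Suc n)
  from Suc.prems obtain \<mu> \<mu>1 \<mu>2 where "wf_dist \<mu>1" "wf_dist \<mu>2" "dist_le \<mu> \<nu>"
    and oplus: "\<mu> \<in> oplus \<mu>1 \<mu>2" and sat1: "sat \<sigma> \<mu>1 (bigsep (Suc n) P)" and "sat \<sigma> \<mu>2 (P (Suc n))"
    by auto
  from Suc.IH[OF \<open>wf_dist \<mu>1\<close> sat1] obtain D where D_sub: "\<forall>\<gamma><Suc n. D \<gamma> \<subseteq> dmn \<mu>1"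
    and D_disj: "disjoint_family_on D {..<Suc n}" and D_PNA: "PNA \<mu>1 (D ` {..<Suc n} - {{}})"
    and D_sat: "\<forall>\<gamma><Suc n. \<exists>\<nu>\<^sub>\<gamma>. wf_dist \<nu>\<^sub>\<gamma> \<and> dmn \<nu>\<^sub>\<gamma> = D \<gamma> \<and> sat \<sigma> \<nu>\<^sub>\<gamma> (P \<gamma>)"
    by blast
  define D' where "D' = D(Suc n := dmn \<mu>2)"
  have "D' ` {..<Suc (Suc n)} = insert (dmn \<mu>2) (D ` {..<Suc n})"
    unfolding D'_def lessThan_Suc[of "Suc n"] by (auto simp: fun_upd_image)
  then have blocks: "D' ` {..<Suc (Suc n)} - {{}} = (D ` {..<Suc n} - {{}}) \<union> ({dmn \<mu>2} - {{}})"
    by auto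
  have PNA_\<mu>: "PNA \<mu> (D' ` {..<Suc (Suc n)} - {{}})"
    unfolding blocks
  proof (rule in_oplusD(3)[OF oplus])
    show "is_partition (D ` {..<Suc n} - {{}})"
      by (rule is_partition_image[OF D_disj])
    show "\<Union>(D ` {..<Suc n} - {{}}) \<subseteq> dmn \<mu>1"
      using D_sub by auto
    show "is_partition ({dmn \<mu>2} - {{}})"
      by (auto simp: is_partition_def)
  qed (auto simp: D_PNA PNA_single_block)
  have D'_sub: "D' \<gamma> \<subseteq> dmn \<mu>" if "\<gamma> < Suc (Suc n)" for \<gamma>
    using that D_sub in_oplusD(2)[OF oplus] by (auto simp: D'_def less_Suc_eq)
  then have "\<Union>(D' ` {..<Suc (Suc n)} - {{}}) \<subseteq> dmn \<mu>"
    by auto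
  then have "PNA \<nu> (D' ` {..<Suc (Suc n)} - {{}})"
    by (rule PNA_dist_le[OF \<open>dist_le \<mu> \<nu>\<close> _ PNA_\<mu>])
  moreover have "\<forall>\<gamma><Suc (Suc n). D' \<gamma> \<subseteq> dmn \<nu>"
    using \<open>dist_le \<mu> \<nu>\<close> D'_sub by (auto simp: dist_le_def)
  moreover have "disjoint_family_on D' {..<Suc (Suc n)}"
    unfolding D'_def using D_disj D_sub in_oplusD(1)[OF oplus] by (rule disjoint_family_on_extend)
  moreover have "\<forall>\<gamma><Suc (Suc n). \<exists>\<nu>\<^sub>\<gamma>. wf_dist \<nu>\<^sub>\<gamma> \<and> dmn \<nu>\<^sub>\<gamma> = D' \<gamma> \<and> sat \<sigma> \<nu>\<^sub>\<gamma> (P \<gamma>)"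
  proof (intro allI impI)
    fix \<gamma> assume "\<gamma> < Suc (Suc n)"
    then consider "\<gamma> < Suc n" | "\<gamma> = Suc n"
      by linarith
    then show "\<exists>\<nu>\<^sub>\<gamma>. wf_dist \<nu>\<^sub>\<gamma> \<and> dmn \<nu>\<^sub>\<gamma> = D' \<gamma> \<and> sat \<sigma> \<nu>\<^sub>\<gamma> (P \<gamma>)"
    proof cases
      case 1
      then show ?thesis
        using D_sat by (simp add: D'_def)
    next
      case 2
      then show ?thesis
        using \<open>wf_dist \<mu>2\<close> \<open>sat \<sigma> \<mu>2 (P (Suc n))\<close> by (intro exI[of _ \<mu>2]) (simp add: D'_def)
    qed
  qed
  ultimately show ?case
    by blast
qed

lemma marg_union_in_oplus:
  assumes "wf_dist \<nu>" "A \<inter> B = {}" "A \<union> B \<subseteq> dmn \<nu>"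
    and PNA: "\<And>P. \<Union>P \<subseteq> A \<union> B \<Longrightarrow> PNA \<nu> P"
  shows "marg (A \<union> B) \<nu> \<in> oplus (marg A \<nu>) (marg B \<nu>)"
proof -
  have "PNA (marg (A \<union> B) \<nu>) (S \<union> T)" if "\<Union>S \<subseteq> A" "\<Union>T \<subseteq> B" for S T
    using that PNA[of "S \<union> T"] PNA_marg_iff[of "S \<union> T" "A \<union> B" \<nu>] by auto
  then show ?thesis
    using assms(1-3) unfolding oplus_def by (simp add: wf_marg marg_marg)
qed

lemma sat_bigsep_Bnd:
  assumes "wf_dist \<nu>" "inj_on y {..<Suc n}" "\<forall>\<gamma><Suc n. y \<gamma> \<in> dom \<sigma> \<union> dmn \<nu>"
    and "\<And>P. \<Union>P \<subseteq> y ` {..<Suc n} \<inter> dmn \<nu> \<Longrightarrow> PNA \<nu> P"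
  shows "sat \<sigma> \<nu> (bigsep (Suc n) (\<lambda>\<gamma>. Bnd (y \<gamma>)))"
  using assms
proof (induction n arbitrary: \<nu>)
  case 0
  then show ?case by simp
next
  case (Suc n)
  define A where "A = y ` {..<Suc n} \<inter> dmn \<nu>"
  define B where "B = {y (Suc n)} \<inter> dmn \<nu>"
  have "A \<inter> B = {}"
    using Suc.prems(2) unfolding A_def B_def by (auto simp: inj_on_def)
  have AB: "A \<union> B = y ` {..<Suc (Suc n)} \<inter> dmn \<nu>"
    unfolding A_def B_def lessThan_Suc[of "Suc n"] by auto
  have "sat \<sigma> (marg A \<nu>) (bigsep (Suc n) (\<lambda>\<gamma>. Bnd (y \<gamma>)))"
  proof (rule Suc.IH)
    show "wf_dist (marg A \<nu>)"
      using Suc.prems(1) by (rule wf_marg) (simp add: A_def)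
    show "inj_on y {..<Suc n}"
      using Suc.prems(2) by (rule inj_on_subset) auto
    show "\<forall>\<gamma><Suc n. y \<gamma> \<in> dom \<sigma> \<union> dmn (marg A \<nu>)"
      using Suc.prems(3) by (auto simp: A_def)
    show "PNA (marg A \<nu>) P" if "\<Union>P \<subseteq> y ` {..<Suc n} \<inter> dmn (marg A \<nu>)" for P
    proof -
      have "\<Union>P \<subseteq> A"
        using that by simp
      moreover from this have "\<Union>P \<subseteq> y ` {..<Suc (Suc n)} \<inter> dmn \<nu>"
        using AB by blast
      ultimately show ?thesis
        by (simp add: PNA_marg_iff Suc.prems(4))
    qed
  qed
  moreover have "marg (A \<union> B) \<nu> \<in> oplus (marg A \<nu>) (marg B \<nu>)"
    using Suc.prems(1,4) \<open>A \<inter> B = {}\<close> AB by (intro marg_union_in_oplus) auto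
  moreover have "sat \<sigma> (marg B \<nu>) (Bnd (y (Suc n)))"
    using Suc.prems(3) by (auto simp: B_def)
  moreover have "A \<union> B \<subseteq> dmn \<nu>"
    using AB by auto
  ultimately show ?case
    using Suc.prems(1) unfolding bigsep.simps sat.simps
    by (intro exI[of _ "marg (A \<union> B) \<nu>"] exI[of _ "marg A \<nu>"] exI[of _ "marg B \<nu>"] conjI)
      (auto intro: wf_marg dist_le_marg)
qed

lemma sat_bigconj_Bnd:
  "sat \<sigma> \<nu> (bigconj (Suc k) (\<lambda>\<alpha>. Bnd (x \<alpha>))) \<longleftrightarrow> set (map x [0..<Suc k]) \<subseteq> dom \<sigma> \<union> dmn \<nu>"
  by (induction k) auto

lemma Sim_value_restrict:
  assumes "wf_dist \<mu>" "dom \<sigma> \<inter> dmn \<mu> = {}" "sat \<sigma> \<mu> (Sim (Var v) e)" "fv e \<subseteq> dom \<sigma> \<union> A"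
    and "v \<in> dmn \<mu>" "m \<in> set_pmf (snd \<mu>)"
  shows "m v = Some (eval \<sigma> (m |` A) e)"
proof -
  have "v \<in> dom m" "\<sigma> v = None"
    using assms dom_of_support[OF assms(1,6)] by auto
  then obtain r where r: "m v = Some r"
    by auto
  then have "r = eval \<sigma> m (Var v)"
    using \<open>\<sigma> v = None\<close> by simp
  also have "\<dots> = eval \<sigma> (m |` A) e"
    using assms(3,4,6) eval_restrict[of e \<sigma> A m] by simp
  finally show ?thesis
    using r by simp
qed

theorem mainTheorem13:
  fixes DV RV :: "'v set" and \<sigma> :: "'v mem" and \<mu> :: "'v dist"
    and N :: nat and K :: "nat \<Rightarrow> nat" and x :: "nat \<Rightarrow> nat \<Rightarrow> 'v" and y :: "nat \<Rightarrow> 'v"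
    and f :: "nat \<Rightarrow> real list \<Rightarrow> real"
  assumes "DV \<inter> RV = {}"
    and "is_state DV RV \<sigma> \<mu>"
    and "0 < N"
    and "inj_on y {..<N}"
    and "(\<forall>\<gamma><N. mono_vec (K \<gamma> + 1) (f \<gamma>)) \<or> (\<forall>\<gamma><N. anti_vec (K \<gamma> + 1) (f \<gamma>))"
    and "sat \<sigma> \<mu> (bigsep N (\<lambda>\<gamma>. bigconj (K \<gamma> + 1) (\<lambda>\<alpha>. Bnd (x \<gamma> \<alpha>))))"
    and "\<forall>\<gamma><N. sat \<sigma> \<mu> (Sim (Var (y \<gamma>)) (Fun (f \<gamma>) (map (\<lambda>\<alpha>. Var (x \<gamma> \<alpha>)) [0..<K \<gamma> + 1])))"
  shows "sat \<sigma> \<mu> (bigsep N (\<lambda>\<gamma>. Bnd (y \<gamma>)))"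
proof -
  obtain n where N: "N = Suc n"
    using \<open>0 < N\<close> gr0_implies_Suc by blast
  have wf: "wf_dist \<mu>" and \<sigma>_\<mu>: "dom \<sigma> \<inter> dmn \<mu> = {}"
    using assms(1,2) unfolding is_state_def by auto
  define xs where "xs \<gamma> = map (x \<gamma>) [0..<K \<gamma> + 1]" for \<gamma>
  define h where "h \<gamma> m = eval \<sigma> m (Fun (f \<gamma>) (map Var (xs \<gamma>)))" for \<gamma> m
  have sim: "sat \<sigma> \<mu> (Sim (Var (y \<gamma>)) (Fun (f \<gamma>) (map Var (xs \<gamma>))))" if "\<gamma> < N" for \<gamma>
    using assms(7) that by (simp add: xs_def comp_def)
  obtain D where "disjoint_family_on D {..<N}" "PNA \<mu> (D ` {..<N} - {{}})"
    and regions: "\<forall>\<gamma><N. \<exists>\<nu>\<^sub>\<gamma>. wf_dist \<nu>\<^sub>\<gamma> \<and> dmn \<nu>\<^sub>\<gamma> = D \<gamma> \<and>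
      sat \<sigma> \<nu>\<^sub>\<gamma> (bigconj (K \<gamma> + 1) (\<lambda>\<alpha>. Bnd (x \<gamma> \<alpha>)))"
    using sat_bigsep_PNA_regions[OF wf assms(6)[unfolded N]] unfolding N by blast
  have xs_D: "set (xs \<gamma>) \<subseteq> dom \<sigma> \<union> D \<gamma>" if \<gamma>: "\<gamma> < N" for \<gamma>
  proof -
    obtain \<nu>\<^sub>\<gamma> where "dmn \<nu>\<^sub>\<gamma> = D \<gamma>" "sat \<sigma> \<nu>\<^sub>\<gamma> (bigconj (K \<gamma> + 1) (\<lambda>\<alpha>. Bnd (x \<gamma> \<alpha>)))"
      using regions \<gamma> by blast
    then show ?thesis
      unfolding xs_def by (simp add: sat_bigconj_Bnd)
  qed
  have val: "m (y \<gamma>) = Some (h \<gamma> (m |` D \<gamma>))"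
    if "\<gamma> \<in> {..<N}" "y \<gamma> \<in> dmn \<mu>" "m \<in> set_pmf (snd \<mu>)" for \<gamma> m
    unfolding h_def using that xs_D by (intro Sim_value_restrict[OF wf \<sigma>_\<mu> sim]) auto
  have mono: "(\<forall>\<gamma>\<in>{..<N}. mono_mem (D \<gamma>) (h \<gamma>)) \<or> (\<forall>\<gamma>\<in>{..<N}. anti_mem (D \<gamma>) (h \<gamma>))"
    unfolding h_def using assms(5) xs_D by (intro mono_or_anti_eval_Fun) (auto simp: xs_def)
  have "PNA \<mu> P" if "\<Union>P \<subseteq> y ` {..<N} \<inter> dmn \<mu>" for P
    using PNA_monotone_image[OF wf \<open>PNA \<mu> (D ` {..<N} - {{}})\<close> \<open>disjoint_family_on D {..<N}\<close>
        val mono that] .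
  moreover have "\<forall>\<gamma><N. y \<gamma> \<in> dom \<sigma> \<union> dmn \<mu>"
    using sim by simp
  ultimately show ?thesis
    using sat_bigsep_Bnd[OF wf assms(4)[unfolded N]] unfolding N by blast
qed

end
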